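(* Consider the SBBS with $d=2$ balls, error probability $\varepsilon\in(0,1)$ and capacity $c\ge2$, with gap process $(W_t)_{t\ge0}$ on $\mathbb Z_{\ge0}$. Let $\tau=\inf\{t\ge1:W_t=0\}$. Then for every $w\in\mathbb Z_{\ge0}$, $P(\tau<\infty\mid W_0=w)=1$ and $\mathbb E[\tau\mid W_0=w]=\infty$.
   Context: Stochastic box-ball system (SBBS). Fix an error probability $\varepsilon\in[0,1]$ and a capacity $c\in\{1,2,\dots\}\cup\{\infty\}$. A configuration is $\zeta\in\{0,1\}^{\mathbb N}$, $\mathbb N=\{1,2,\dots\}$, with finitely many $1$'s (balls). Given $\zeta$, the stochastic carrier process $\Gamma$ is defined by $\Gamma(0)=0$ and recursively (with fresh independent randomness at each $k$): $\Gamma(k)=\Gamma(k-1)+1$ with probability $1-\varepsilon$ (and $\Gamma(k)=\Gamma(k-1)$ otherwise) if $\zeta(k)=1$ and $\Gamma(k-1)<c$; $\Gamma(k)=\Gamma(k-1)-1$ if $\zeta(k)=0$ and $\Gamma(k-1)\ge1$; $\Gamma(k)=\Gamma(k-1)$ otherwise. The new configuration is $\zeta'(k)=\mathbf 1(\Gamma(k)-\Gamma(k-1)=-1)+\mathbf 1(\Gamma(k)=\Gamma(k-1),\ \zeta(k)=1)$. Iterating independently gives the SBBS trajectory $(\zeta_t)_{t\in\mathbb Z_{\ge0}}$. With $d=2$ balls at positions $\zeta^{(1)}_t<\zeta^{(2)}_t$, the gap process is $W_t=\zeta^{(2)}_t-\zeta^{(1)}_t-1$, a Markov chain on $\mathbb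 Z_{\ge0}$. *)

theory Defs
  imports "HOL-Probability.Probability"
begin

text \<open>Configurations: \<zeta> :: nat \<Rightarrow> bool, only sites k \<ge> 1 are meaningful (site 0 is empty). The randomness used at site k when the carrier tries
  to pick up a ball is a coin b k :: bool, True (success) with probability 1 - \<epsilon>.\<close>

fun carrier :: "enat \<Rightarrow> (nat \<Rightarrow> bool) \<Rightarrow> (nat \<Rightarrow> bool) \<Rightarrow> nat \<Rightarrow> nat" where
  "carrier c \<zeta> b 0 = 0"
| "carrier c \<zeta> b (Suc k) =
     (let g = carrier c \<zeta> b k in
      if \<zeta> (Suc k) \<and> enat g < c then (if b (Suc k) then g + 1 else g)
      else if \<not> \<zeta> (Suc k) \<and> g \<ge> 1 then g - 1
      else g)"

definition sbbs_update :: "enat \<Rightarrow> (nat \<Rightarrow> bool) \<Rightarrow> (nat \<Rightarrow> bool) \<Rightarrow> nat \<Rightarrow> bool" where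
  "sbbs_update c \<zeta> b k =
     (k \<ge> 1 \<and>
       (carrier c \<zeta> b k + 1 = carrier c \<zeta> b (k - 1)
        \<or> (carrier c \<zeta> b k = carrier c \<zeta> b (k - 1) \<and> \<zeta> k)))"

fun sbbs_traj :: "enat \<Rightarrow> (nat \<Rightarrow> bool) \<Rightarrow> (nat \<times> nat \<Rightarrow> bool) \<Rightarrow> nat \<Rightarrow> nat \<Rightarrow> bool" where
  "sbbs_traj c \<zeta>0 \<omega> 0 = \<zeta>0"
| "sbbs_traj c \<zeta>0 \<omega> (Suc t) = sbbs_update c (sbbs_traj c \<zeta>0 \<omega> t) (\<lambda>k. \<omega> (t, k))"

definition coin_space :: "real \<Rightarrow> (nat \<times> nat \<Rightarrow> bool) measure" where
  "coin_space \<epsilon> = PiM UNIV (\<lambda>_. measure_pmf (bernoulli_pmf (1 - \<epsilon>)))"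

definition gap :: "(nat \<Rightarrow> bool) \<Rightarrow> nat" where
  "gap \<zeta> = Max {k. \<zeta> k} - Min {k. \<zeta> k} - 1"

definition hit_time :: "enat \<Rightarrow> (nat \<Rightarrow> bool) \<Rightarrow> (nat \<times> nat \<Rightarrow> bool) \<Rightarrow> enat" where
  "hit_time c \<zeta>0 \<omega> =
     (if \<exists>t\<ge>1. gap (sbbs_traj c \<zeta>0 \<omega> t) = 0
      then enat (LEAST t. t \<ge> 1 \<and> gap (sbbs_traj c \<zeta>0 \<omega> t) = 0)
      else \<infinity>)"

end

theory Submission
  imports Defs
begin

text \<open>
  While the gap is positive, each of the two balls independently moves one site to the right with
  probability 1 - \<epsilon>, so the gap performs a lazy simple symmetric random walk whose steps +1 and -1
  both have probability \<epsilon>(1 - \<epsilon>); capacity at least 2 is what keeps two adjacent balls from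
  blocking each other. The probability of hitting gap 0 and the expected hitting time satisfy the
  first-step equations of this walk, so their infima over the position of the first ball are
  concave functions of the gap, and for the expected time concave with a fixed positive defect. A
  nonnegative concave sequence is nondecreasing, which together with the value 1 at gap 0 forces
  the hitting probability to be 1; no finite nonnegative sequence is uniformly strictly concave,
  which forces the expected hitting time to be infinite. The return time \<tau> is one step of the
  walk followed by such a hitting time.
\<close>

section \<open>Two-ball configurations\<close>

definition two_balls :: "nat \<times> nat \<Rightarrow> nat \<Rightarrow> bool" where
  "two_balls s k \<longleftrightarrow> k = fst s \<or> k = fst s + snd s + 1"

text \<open>
  The arguments a and b are the coins read at the first and the second ball. Adjacent balls
  interact: a carrier that has picked up the first ball meets the second one at once and, having
  capacity at least 2, can pick it up as well.
\<close>
definition two_ball_step :: "nat \<times> nat \<Rightarrow> bool \<Rightarrow> bool \<Rightarrow> nat \<times> nat" where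
  "two_ball_step s a b = (if snd s = 0
     then (fst s + (if a then (if b then 2 else 1) else 0), if \<not> a \<and> b then 1 else 0)
     else (fst s + (if a then 1 else 0), if a \<and> \<not> b then snd s - 1 else if b \<and> \<not> a then snd s + 1 else snd s))"

text \<open>For adjacent balls the truncated subtraction unloads the carrier one ball per empty site.\<close>
definition two_ball_carrier :: "nat \<Rightarrow> nat \<Rightarrow> (nat \<Rightarrow> bool) \<Rightarrow> nat \<Rightarrow> nat" where
  "two_ball_carrier x w b k = (if w = 0 then
      (if k < x then 0 else if k = x then of_bool (b x)
       else of_bool (b x) + of_bool (b (x + 1)) - (k - (x + 1)))
     else (if k = x then of_bool (b x) else if k = x + w + 1 then of_bool (b (x + w + 1)) else 0))"

lemma carrier_two_balls:
  assumes "x \<ge> 1" and "c \<ge> 2"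
  shows "carrier c (two_balls (x, w)) b k = two_ball_carrier x w b k"
proof (induction k)
  case 0
  then show ?case using assms by (simp add: two_ball_carrier_def)
next
  case (Suc k)
  have "enat g < c" if "g \<le> 1" for g
  proof -
    have "enat g < 2" using that by (simp add: numeral_eq_enat)
    then show ?thesis using assms(2) by (rule less_le_trans)
  qed
  then have "enat 0 < c" and "enat 1 < c" by auto
  with Suc assms(1) show ?case
    by (auto simp: two_ball_carrier_def two_balls_def Let_def split: if_splits)
qed

lemma sbbs_update_two_balls:
  assumes "x \<ge> 1" and "c \<ge> 2"
  shows "sbbs_update c (two_balls (x, w)) b = two_balls (two_ball_step (x, w) (b x) (b (x + w + 1)))"
proof
  fix k
  show "sbbs_update c (two_balls (x, w)) b k = two_balls (two_ball_step (x, w) (b x) (b (x + w + 1))) k"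
    unfolding sbbs_update_def carrier_two_balls[OF assms] using assms(1)
    by (cases "k = 0") (auto simp: two_ball_carrier_def two_balls_def two_ball_step_def split: if_splits)
qed

fun two_ball_path :: "nat \<times> nat \<Rightarrow> (nat \<times> nat \<Rightarrow> bool) \<Rightarrow> nat \<Rightarrow> nat \<times> nat" where
  "two_ball_path s \<omega> 0 = s"
| "two_ball_path s \<omega> (Suc t) = (let s' = two_ball_path s \<omega> t in
     two_ball_step s' (\<omega> (t, fst s')) (\<omega> (t, fst s' + snd s' + 1)))"

abbreviation next_state :: "nat \<times> nat \<Rightarrow> (nat \<times> nat \<Rightarrow> bool) \<Rightarrow> nat \<times> nat" where
  "next_state s \<omega> \<equiv> two_ball_step s (\<omega> (0, fst s)) (\<omega> (0, fst s + snd s + 1))"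

definition shift_time :: "(nat \<times> nat \<Rightarrow> bool) \<Rightarrow> nat \<times> nat \<Rightarrow> bool" where
  "shift_time \<omega> = (\<lambda>(t, k). \<omega> (Suc t, k))"

lemma two_ball_path_Suc_shift:
  "two_ball_path s \<omega> (Suc t) = two_ball_path (next_state s \<omega>) (shift_time \<omega>) t"
  by (induction t) (auto simp: shift_time_def Let_def)

lemma two_ball_path_fst_ge: "fst (two_ball_path s \<omega> t) \<ge> fst s"
  by (induction t) (auto simp: two_ball_step_def Let_def intro: le_trans)

lemma sbbs_traj_two_balls:
  assumes "fst s \<ge> 1" and "c \<ge> 2"
  shows "sbbs_traj c (two_balls s) \<omega> t = two_balls (two_ball_path s \<omega> t)"
proof (induction t)
  case 0
  then show ?case by simp
next
  case (Suc t)
  obtain x w where xw: "two_ball_path s \<omega> t = (x, w)" by fastforce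
  have "x \<ge> 1" using two_ball_path_fst_ge[of s \<omega> t] xw assms(1) by simp
  with Suc xw show ?case by (simp add: sbbs_update_two_balls[OF _ assms(2)])
qed

lemma gap_two_balls: "gap (two_balls s) = snd s"
proof -
  have "{k. two_balls s k} = {fst s, fst s + snd s + 1}" by (auto simp: two_balls_def)
  then show ?thesis by (simp add: gap_def)
qed

lemma two_balls_if_card_2:
  assumes "card {k. \<zeta> k} = 2" and "\<not> \<zeta> 0"
  obtains x w where "x \<ge> 1" and "\<zeta> = two_balls (x, w)"
proof -
  obtain x y where xy: "{k. \<zeta> k} = {x, y}" "x < y"
    using assms(1) by (auto simp: card_2_iff) (metis insert_commute linorder_neqE_nat)
  then have "x \<ge> 1" using assms(2) by (metis insertI1 mem_Collect_eq less_one not_le)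
  moreover have "\<zeta> = two_balls (x, y - x - 1)"
    using xy by (auto simp: two_balls_def fun_eq_iff set_eq_iff)
  ultimately show ?thesis by (rule that)
qed

definition first_hit :: "(nat \<Rightarrow> bool) \<Rightarrow> enat" where
  "first_hit P = (if \<exists>t. P t then enat (LEAST t. P t) else \<infinity>)"

lemma first_hit_0: "P 0 \<Longrightarrow> first_hit P = 0"
  by (auto simp: first_hit_def zero_enat_def intro: Least_eq_0)

lemma first_hit_Suc:
  assumes "\<not> P 0"
  shows "first_hit P = eSuc (first_hit (\<lambda>t. P (Suc t)))"
proof (cases "\<exists>t. P t")
  case True
  then obtain t where "P (Suc t)" using assms by (metis not0_implies_Suc)
  moreover have "(LEAST t. P t) = Suc (LEAST t. P (Suc t))"
    using True assms by (metis Least_Suc not0_implies_Suc)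
  ultimately show ?thesis using True by (auto simp: first_hit_def eSuc_enat)
next
  case False
  then show ?thesis by (simp add: first_hit_def)
qed

lemma hit_time_eq_first_hit:
  "hit_time c \<zeta> \<omega> = eSuc (first_hit (\<lambda>t. gap (sbbs_traj c \<zeta> \<omega> (Suc t)) = 0))"
proof -
  have "hit_time c \<zeta> \<omega> = first_hit (\<lambda>t. t \<ge> 1 \<and> gap (sbbs_traj c \<zeta> \<omega> t) = 0)"
    by (simp add: hit_time_def first_hit_def)
  then show ?thesis by (simp add: first_hit_Suc)
qed

definition gap_hit_time :: "nat \<times> nat \<Rightarrow> (nat \<times> nat \<Rightarrow> bool) \<Rightarrow> enat" where
  "gap_hit_time s \<omega> = first_hit (\<lambda>t. snd (two_ball_path s \<omega> t) = 0)"

definition return_time :: "nat \<times> nat \<Rightarrow> (nat \<times> nat \<Rightarrow> bool) \<Rightarrow> enat" where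
  "return_time s \<omega> = eSuc (gap_hit_time (next_state s \<omega>) (shift_time \<omega>))"

lemma gap_hit_time_0: "snd s = 0 \<Longrightarrow> gap_hit_time s \<omega> = 0"
  by (simp add: gap_hit_time_def first_hit_0)

lemma gap_hit_time_eq_return_time:
  "snd s \<noteq> 0 \<Longrightarrow> gap_hit_time s \<omega> = return_time s \<omega>"
  unfolding gap_hit_time_def return_time_def
  by (subst first_hit_Suc) (simp_all add: two_ball_path_Suc_shift del: two_ball_path.simps(2))

lemma hit_time_two_balls:
  assumes "fst s \<ge> 1" and "c \<ge> 2"
  shows "hit_time c (two_balls s) \<omega> = return_time s \<omega>"
proof -
  have gap_traj: "gap (sbbs_traj c (two_balls s) \<omega> (Suc t))
      = snd (two_ball_path (next_state s \<omega>) (shift_time \<omega>) t)" for t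
    by (simp only: sbbs_traj_two_balls[OF assms] gap_two_balls two_ball_path_Suc_shift)
  show ?thesis
    unfolding hit_time_eq_first_hit return_time_def gap_hit_time_def gap_traj ..
qed

section \<open>The coin field\<close>

lemma measurable_coin:
  "(\<lambda>\<omega>. \<omega> n) \<in> measurable (PiM UNIV (\<lambda>_. measure_pmf p)) (count_space UNIV)"
  by (rule measurable_compose[OF measurable_component_singleton measurable_ident_sets]) auto

lemma measurable_two_coins:
  fixes p :: "'a::countable pmf"
  shows "(\<lambda>\<omega>. g (\<omega> n) (\<omega> m)) \<in> measurable (PiM UNIV (\<lambda>_. measure_pmf p)) (count_space UNIV)"
proof -
  have "(\<lambda>\<omega>. g a (\<omega> m)) \<in> measurable (PiM UNIV (\<lambda>_. measure_pmf p)) (count_space UNIV)" for a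
    by (rule measurable_compose_countable[where f="\<lambda>b \<omega>. g a b", OF _ measurable_coin]) simp
  then show ?thesis
    by (rule measurable_compose_countable[where f="\<lambda>a \<omega>. g a (\<omega> m)", OF _ measurable_coin])
qed

lemma measurable_two_ball_path:
  "(\<lambda>\<omega>. two_ball_path s \<omega> t) \<in> measurable (PiM UNIV (\<lambda>_. measure_pmf p)) (count_space UNIV)"
proof (induction t)
  case (Suc t)
  show ?case
    unfolding two_ball_path.simps Let_def
    by (rule measurable_compose_countable[OF measurable_two_coins Suc])
qed simp

lemma measurable_first_hit:
  assumes [measurable]: "\<And>t. Measurable.pred M (P t)"
  shows "(\<lambda>\<omega>. first_hit (\<lambda>t. P t \<omega>)) \<in> measurable M (count_space UNIV)"
  unfolding first_hit_def by measurable

lemma measurable_gap_hit_time[measurable]: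
  "gap_hit_time s \<in> measurable (PiM UNIV (\<lambda>_. measure_pmf p)) (count_space UNIV)"
  unfolding gap_hit_time_def[abs_def]
  by (rule measurable_first_hit, rule measurable_compose[OF measurable_two_ball_path]) simp

lemma measurable_shift_time:
  assumes "\<And>t k. (Suc t, k) \<in> J"
  shows "shift_time \<in> measurable (PiM J (\<lambda>_. M)) (PiM UNIV (\<lambda>_. M))"
  unfolding shift_time_def
  by (rule measurable_PiM_single') (use assms in \<open>auto simp: space_PiM\<close>)

lemma measurable_return_time[measurable]:
  "return_time s \<in> measurable (PiM UNIV (\<lambda>_. measure_pmf p)) (count_space UNIV)"
proof -
  have "(\<lambda>\<omega>. eSuc (gap_hit_time q (shift_time \<omega>)))
      \<in> measurable (PiM UNIV (\<lambda>_. measure_pmf p)) (count_space UNIV)" for q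
    by (rule measurable_compose[OF measurable_compose[OF measurable_shift_time measurable_gap_hit_time]])
      simp_all
  then show ?thesis
    unfolding return_time_def[abs_def]
    by (rule measurable_compose_countable[OF _ measurable_two_coins])
qed

lemma distr_shift_time:
  assumes "prob_space M" and "\<And>t k. (Suc t, k) \<in> J"
  shows "distr (PiM J (\<lambda>_. M)) (PiM UNIV (\<lambda>_. M)) shift_time = PiM UNIV (\<lambda>_. M)"
proof -
  have "inj (\<lambda>(t, k). (Suc t, k :: 'a))" by (auto simp: inj_def)
  moreover have "(\<lambda>(t, k). (Suc t, k)) \<in> UNIV \<rightarrow> J" using assms(2) by auto
  ultimately have "distr (PiM J (\<lambda>_. M)) (PiM UNIV (\<lambda>_. M))
      (\<lambda>\<omega>. \<lambda>n\<in>UNIV. \<omega> (case n of (t, k) \<Rightarrow> (Suc t, k))) = PiM UNIV (\<lambda>_. M)"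
    using distr_PiM_reindex[of J "\<lambda>_. M" "\<lambda>(t, k). (Suc t, k)" UNIV] assms(1) by simp
  moreover have "(\<lambda>\<omega>. \<lambda>n\<in>UNIV. \<omega> (case n of (t, k) \<Rightarrow> (Suc t, k))) = shift_time"
    by (auto simp: shift_time_def fun_eq_iff)
  ultimately show ?thesis by simp
qed

lemma nn_integral_PiM_insert:
  assumes M: "\<And>i. i \<in> insert j J \<Longrightarrow> prob_space (M i)"
    and f: "f \<in> borel_measurable (PiM (insert j J) M)"
  shows "(\<integral>\<^sup>+\<omega>. f \<omega> \<partial>PiM (insert j J) M) = (\<integral>\<^sup>+a. \<integral>\<^sup>+X. f (X(j := a)) \<partial>PiM J M \<partial>M j)"
proof -
  interpret PJ: prob_space "PiM J M" using M by (intro prob_space_PiM) auto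
  have upd: "(\<lambda>(a, X). X(j := a)) \<in> measurable (M j \<Otimes>\<^sub>M PiM J M) (PiM (insert j J) M)"
    using measurable_fun_upd[of "insert j J" J j, OF _ measurable_snd measurable_fst]
    by (simp add: case_prod_beta')
  have "(\<integral>\<^sup>+\<omega>. f \<omega> \<partial>PiM (insert j J) M) =
      (\<integral>\<^sup>+\<omega>. f \<omega> \<partial>distr (M j \<Otimes>\<^sub>M PiM J M) (PiM (insert j J) M) (\<lambda>(a, X). X(j := a)))"
    using distr_pair_PiM_eq_PiM[of J M j] M by simp
  also have "\<dots> = (\<integral>\<^sup>+(a, X). f (X(j := a)) \<partial>(M j \<Otimes>\<^sub>M PiM J M))"
    using upd f by (simp add: nn_integral_distr case_prod_beta')
  also have "\<dots> = (\<integral>\<^sup>+a. \<integral>\<^sup>+X. f (X(j := a)) \<partial>PiM J M \<partial>M j)"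
    using PJ.nn_integral_fst[OF measurable_compose[OF upd f]] by (simp add: case_prod_beta')
  finally show ?thesis .
qed

lemma nn_integral_two_coins_shift:
  fixes G :: "bool \<Rightarrow> bool \<Rightarrow> (nat \<times> nat \<Rightarrow> bool) \<Rightarrow> ennreal"
    and x y :: nat
  assumes "x \<noteq> y" and G: "\<And>a b. G a b \<in> borel_measurable (PiM UNIV (\<lambda>_. measure_pmf p))"
  shows "(\<integral>\<^sup>+\<omega>. G (\<omega> (0, x)) (\<omega> (0, y)) (shift_time \<omega>) \<partial>PiM UNIV (\<lambda>_. measure_pmf p))
    = (\<integral>\<^sup>+a. \<integral>\<^sup>+b. \<integral>\<^sup>+\<omega>. G a b \<omega> \<partial>PiM UNIV (\<lambda>_. measure_pmf p) \<partial>measure_pmf p \<partial>measure_pmf p)"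
proof -
  define M where "M = (\<lambda>_ :: nat \<times> nat. measure_pmf p)"
  define J where "J = UNIV - {(0 :: nat, x), (0, y)}"
  define F where "F \<omega> = G (\<omega> (0, x)) (\<omega> (0, y)) (shift_time \<omega>)" for \<omega>
  have UNIV_eq: "UNIV = insert (0, x) (insert (0, y) J)" by (auto simp: J_def)
  have prob: "prob_space (M i)" for i by (simp add: M_def prob_space_measure_pmf)
  have shift_J: "(Suc t, k) \<in> J" for t k by (simp add: J_def)
  have F: "F \<in> borel_measurable (PiM UNIV M)"
  proof -
    have "(\<lambda>\<omega>. G a b (shift_time \<omega>)) \<in> borel_measurable (PiM UNIV M)" for a b
      unfolding M_def by (rule measurable_compose[OF measurable_shift_time G]) simp
    then have "(\<lambda>\<omega>. G a (\<omega> (0, y)) (shift_time \<omega>)) \<in> borel_measurable (PiM UNIV M)" for a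
      unfolding M_def
      by (rule measurable_compose_countable[where f="\<lambda>b \<omega>. G a b (shift_time \<omega>)", OF _ measurable_coin])
    then show ?thesis
      unfolding F_def M_def
      by (rule measurable_compose_countable[where f="\<lambda>a \<omega>. G a (\<omega> (0, y)) (shift_time \<omega>)",
            OF _ measurable_coin])
  qed
  have "(\<integral>\<^sup>+\<omega>. F \<omega> \<partial>PiM UNIV M)
      = (\<integral>\<^sup>+a. \<integral>\<^sup>+X. F (X((0, x) := a)) \<partial>PiM (insert (0, y) J) M \<partial>M (0, x))"
    using nn_integral_PiM_insert[where M=M and j="(0, x)" and J="insert (0, y) J" and f=F] prob F
    unfolding UNIV_eq[symmetric] by blast
  also have "\<dots>
      = (\<integral>\<^sup>+a. \<integral>\<^sup>+b. \<integral>\<^sup>+Z. F (Z((0, y) := b, (0, x) := a)) \<partial>PiM J M \<partial>M (0, y) \<partial>M (0, x))"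
  proof (rule nn_integral_cong)
    fix a
    have "(\<lambda>X. X((0, x) := a)) \<in> measurable (PiM (insert (0, y) J) M) (PiM UNIV M)"
      by (rule measurable_fun_upd[where J="insert (0, y) J"]) (use UNIV_eq in \<open>auto simp: M_def\<close>)
    then show "(\<integral>\<^sup>+X. F (X((0, x) := a)) \<partial>PiM (insert (0, y) J) M)
        = (\<integral>\<^sup>+b. \<integral>\<^sup>+Z. F (Z((0, y) := b, (0, x) := a)) \<partial>PiM J M \<partial>M (0, y))"
      by (intro nn_integral_PiM_insert prob measurable_compose[OF _ F])
  qed
  also have "\<dots> = (\<integral>\<^sup>+a. \<integral>\<^sup>+b. \<integral>\<^sup>+\<omega>. G a b \<omega> \<partial>PiM UNIV M \<partial>M (0, y) \<partial>M (0, x))"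
  proof (intro nn_integral_cong)
    fix a b
    have "(\<integral>\<^sup>+Z. F (Z((0, y) := b, (0, x) := a)) \<partial>PiM J M)
        = (\<integral>\<^sup>+Z. G a b (shift_time Z) \<partial>PiM J M)"
      using assms(1) by (simp add: F_def shift_time_def case_prod_beta')
    also have "\<dots> = (\<integral>\<^sup>+\<omega>. G a b \<omega> \<partial>distr (PiM J M) (PiM UNIV M) shift_time)"
      by (rule nn_integral_distr[symmetric])
        (use measurable_shift_time[OF shift_J] G in \<open>simp_all add: M_def\<close>)
    also have "\<dots> = (\<integral>\<^sup>+\<omega>. G a b \<omega> \<partial>PiM UNIV M)"
      using distr_shift_time[OF prob shift_J] by (simp add: M_def)
    finally show "(\<integral>\<^sup>+Z. F (Z((0, y) := b, (0, x) := a)) \<partial>PiM J M)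
        = (\<integral>\<^sup>+\<omega>. G a b \<omega> \<partial>PiM UNIV M)" .
  qed
  finally show ?thesis by (simp add: F_def M_def)
qed

lemma nn_integral_bool_pmf:
  "(\<integral>\<^sup>+a. f a \<partial>measure_pmf (p :: bool pmf)) = (\<Sum>a\<in>UNIV. ennreal (pmf p a) * f a)"
  by (simp add: nn_integral_measure_pmf nn_integral_count_space_finite)

lemma nn_integral_return_time:
  "(\<integral>\<^sup>+\<omega>. f (return_time s \<omega>) \<partial>coin_space e)
    = (\<Sum>a\<in>UNIV. \<Sum>b\<in>UNIV.
        ennreal (pmf (bernoulli_pmf (1 - e)) a) * ennreal (pmf (bernoulli_pmf (1 - e)) b)
        * (\<integral>\<^sup>+\<omega>. f (eSuc (gap_hit_time (two_ball_step s a b) \<omega>)) \<partial>coin_space e))"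
proof -
  have "(\<integral>\<^sup>+\<omega>. f (return_time s \<omega>) \<partial>coin_space e)
    = (\<integral>\<^sup>+a. \<integral>\<^sup>+b. \<integral>\<^sup>+\<omega>. f (eSuc (gap_hit_time (two_ball_step s a b) \<omega>)) \<partial>coin_space e
        \<partial>bernoulli_pmf (1 - e) \<partial>bernoulli_pmf (1 - e))"
    unfolding return_time_def coin_space_def
    by (rule nn_integral_two_coins_shift
        [where G="\<lambda>a b \<omega>. f (eSuc (gap_hit_time (two_ball_step s a b) \<omega>))"])
      (simp_all add: measurable_compose[OF measurable_gap_hit_time])
  then show ?thesis
    by (simp only: nn_integral_bool_pmf sum_distrib_left mult.assoc)
qed

section \<open>First-step equations\<close>

definition expected_hit_time :: "real \<Rightarrow> nat \<times> nat \<Rightarrow> ennreal" where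
  "expected_hit_time e s = (\<integral>\<^sup>+\<omega>. ennreal_of_enat (gap_hit_time s \<omega>) \<partial>coin_space e)"

definition hit_probability :: "real \<Rightarrow> nat \<times> nat \<Rightarrow> ennreal" where
  "hit_probability e s = (\<integral>\<^sup>+\<omega>. of_bool (gap_hit_time s \<omega> < \<infinity>) \<partial>coin_space e)"

lemma prob_space_coin_space: "prob_space (coin_space e)"
  unfolding coin_space_def by (rule prob_space_PiM) (simp add: prob_space_measure_pmf)

lemma expected_return_time:
  "(\<integral>\<^sup>+\<omega>. ennreal_of_enat (return_time s \<omega>) \<partial>coin_space e)
    = (\<Sum>a\<in>UNIV. \<Sum>b\<in>UNIV.
        ennreal (pmf (bernoulli_pmf (1 - e)) a) * ennreal (pmf (bernoulli_pmf (1 - e)) b)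
        * (1 + expected_hit_time e (two_ball_step s a b)))"
proof -
  interpret prob_space "coin_space e" by (rule prob_space_coin_space)
  have "(\<lambda>\<omega>. ennreal_of_enat (gap_hit_time s' \<omega>)) \<in> borel_measurable (coin_space e)" for s'
    unfolding coin_space_def by (rule measurable_compose[OF measurable_gap_hit_time]) simp
  then have "(\<integral>\<^sup>+\<omega>. ennreal_of_enat (eSuc (gap_hit_time s' \<omega>)) \<partial>coin_space e)
      = 1 + expected_hit_time e s'" for s'
    unfolding expected_hit_time_def ennreal_of_enat_eSuc
    by (subst nn_integral_add) (simp_all add: emeasure_space_1 add.commute)
  then show ?thesis by (simp add: nn_integral_return_time)
qed

lemma return_probability:
  "(\<integral>\<^sup>+\<omega>. of_bool (return_time s \<omega> < \<infinity>) \<partial>coin_space e)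
    = (\<Sum>a\<in>UNIV. \<Sum>b\<in>UNIV.
        ennreal (pmf (bernoulli_pmf (1 - e)) a) * ennreal (pmf (bernoulli_pmf (1 - e)) b)
        * hit_probability e (two_ball_step s a b))"
proof -
  have eSuc_finite: "of_bool (eSuc n < \<infinity>) = (of_bool (n < \<infinity>) :: ennreal)" for n
    by (cases n) (simp_all add: eSuc_enat)
  show ?thesis
    using nn_integral_return_time[where f="\<lambda>n. of_bool (n < \<infinity>)"]
    by (simp only: hit_probability_def eSuc_finite)
qed

lemma expected_hit_time_eq:
  assumes "0 < e" and "e < 1" and "w \<noteq> 0"
  shows "expected_hit_time e (x, w)
      = ennreal (1 - e) * ennreal (1 - e) * (1 + expected_hit_time e (x + 1, w))
      + ennreal (1 - e) * ennreal e * (1 + expected_hit_time e (x + 1, w - 1))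
      + ennreal e * ennreal (1 - e) * (1 + expected_hit_time e (x, w + 1))
      + ennreal e * ennreal e * (1 + expected_hit_time e (x, w))"
proof -
  have nz: "snd (x, w) \<noteq> 0" using assms(3) by simp
  have "expected_hit_time e (x, w)
      = (\<integral>\<^sup>+\<omega>. ennreal_of_enat (return_time (x, w) \<omega>) \<partial>coin_space e)"
    unfolding expected_hit_time_def gap_hit_time_eq_return_time[OF nz] ..
  then show ?thesis
    unfolding expected_return_time using assms by (simp add: UNIV_bool two_ball_step_def add_ac)
qed

lemma hit_probability_eq:
  assumes "0 < e" and "e < 1" and "w \<noteq> 0"
  shows "hit_probability e (x, w) = ennreal (1 - e) * ennreal (1 - e) * hit_probability e (x + 1, w)
      + ennreal (1 - e) * ennreal e * hit_probability e (x + 1, w - 1)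
      + ennreal e * ennreal (1 - e) * hit_probability e (x, w + 1)
      + ennreal e * ennreal e * hit_probability e (x, w)"
proof -
  have nz: "snd (x, w) \<noteq> 0" using assms(3) by simp
  have "hit_probability e (x, w)
      = (\<integral>\<^sup>+\<omega>. of_bool (return_time (x, w) \<omega> < \<infinity>) \<partial>coin_space e)"
    unfolding hit_probability_def gap_hit_time_eq_return_time[OF nz] ..
  then show ?thesis
    unfolding return_probability using assms by (simp add: UNIV_bool two_ball_step_def add_ac)
qed

lemma hit_probability_0: "hit_probability e (x, 0) = 1"
proof -
  interpret prob_space "coin_space e" by (rule prob_space_coin_space)
  show ?thesis by (simp add: hit_probability_def gap_hit_time_0 emeasure_space_1)
qed

lemma hit_probability_le_1: "hit_probability e s \<le> 1"
proof -
  interpret prob_space "coin_space e" by (rule prob_space_coin_space)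
  have "hit_probability e s \<le> (\<integral>\<^sup>+\<omega>. 1 \<partial>coin_space e)"
    unfolding hit_probability_def by (rule nn_integral_mono) simp
  then show ?thesis by (simp add: emeasure_space_1)
qed

section \<open>Solutions of the first-step equations\<close>

lemma concave_nonneg_seq_incr:
  fixes r :: "nat \<Rightarrow> real"
  assumes nonneg: "\<And>n. r n \<ge> 0" and concave: "\<And>j. r (Suc (Suc j)) - r (Suc j) \<le> r (Suc j) - r j"
  shows "r j \<le> r (Suc j)"
proof (rule ccontr)
  define d where "d = r (Suc j) - r j"
  assume "\<not> r j \<le> r (Suc j)"
  then have "d < 0" by (simp add: d_def)
  have incr_le: "r (Suc (j + n)) - r (j + n) \<le> d" for n
  proof (induction n)
    case (Suc n)
    then show ?case using concave[of "j + n"] by simp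
  qed (simp add: d_def)
  have linear_bound: "r (j + n) \<le> r j + real n * d" for n
  proof (induction n)
    case (Suc n)
    then show ?case using incr_le[of n] by (simp add: algebra_simps)
  qed simp
  obtain n :: nat where "r j / (- d) < real n" using reals_Archimedean2 by blast
  with \<open>d < 0\<close> have "r j < real n * (- d)" using pos_divide_less_eq[of "- d"] by simp
  with linear_bound[of n] nonneg[of "j + n"] show False by (simp add: algebra_simps)
qed

lemma no_uniformly_concave_nonneg_seq:
  fixes r :: "nat \<Rightarrow> real"
  assumes nonneg: "\<And>n. r n \<ge> 0" and "k > 0"
    and concave: "\<And>j. r (Suc (Suc j)) - r (Suc j) \<le> r (Suc j) - r j - k"
  shows False
proof -
  have incr: "r n \<le> r (Suc n)" for n
    by (rule concave_nonneg_seq_incr[OF nonneg]) (use concave \<open>k > 0\<close> in \<open>smt (verit)\<close>)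
  have incr_le: "r (Suc n) - r n \<le> r 1 - r 0 - real n * k" for n
  proof (induction n)
    case (Suc n)
    then show ?case using concave[of n] by (simp add: algebra_simps)
  qed simp
  obtain n :: nat where "real n > (r 1 - r 0) / k" using reals_Archimedean2 by blast
  with \<open>k > 0\<close> have "real n * k > r 1 - r 0" by (simp add: pos_divide_less_eq)
  with incr_le[of n] incr[of n] show False by simp
qed

text \<open>
  The first-step equations tie the value at the first-ball position x to values at x and x + 1;
  the infimum over x turns them into inequalities for a function of the gap alone.
\<close>
lemma INF_first_step_ineq:
  fixes V :: "nat \<times> nat \<Rightarrow> ennreal"
  assumes eq: "\<And>x. V (x, w) = A1 * (K + V (x + 1, w)) + A2 * (K + V (x + 1, w - 1))
      + A3 * (K + V (x, w + 1)) + A4 * (K + V (x, w))"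
  shows "A1 * (K + (INF x. V (x, w))) + A2 * (K + (INF x. V (x, w - 1)))
      + A3 * (K + (INF x. V (x, w + 1))) + A4 * (K + (INF x. V (x, w))) \<le> (INF x. V (x, w))"
proof (rule INF_greatest)
  fix x
  have "A1 * (K + (INF x. V (x, w))) + A2 * (K + (INF x. V (x, w - 1)))
      + A3 * (K + (INF x. V (x, w + 1))) + A4 * (K + (INF x. V (x, w)))
     \<le> A1 * (K + V (x + 1, w)) + A2 * (K + V (x + 1, w - 1))
      + A3 * (K + V (x, w + 1)) + A4 * (K + V (x, w))"
    by (intro add_mono mult_left_mono INF_lower order_refl) auto
  also have "\<dots> = V (x, w)" by (rule eq[symmetric])
  finally show "A1 * (K + (INF x. V (x, w))) + A2 * (K + (INF x. V (x, w - 1)))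
      + A3 * (K + (INF x. V (x, w + 1))) + A4 * (K + (INF x. V (x, w))) \<le> V (x, w)" .
qed

lemma first_step_ineq_real:
  fixes m :: "nat \<Rightarrow> ennreal" and e K :: real
  assumes e: "0 < e" "e < 1" and "K \<ge> 0"
    and finite: "m (w - 1) < \<infinity>" "m w < \<infinity>" "m (w + 1) < \<infinity>"
    and ineq: "ennreal (1 - e) * ennreal (1 - e) * (ennreal K + m w)
      + ennreal (1 - e) * ennreal e * (ennreal K + m (w - 1))
      + ennreal e * ennreal (1 - e) * (ennreal K + m (w + 1))
      + ennreal e * ennreal e * (ennreal K + m w) \<le> m w"
  shows "enn2real (m (w + 1)) - enn2real (m w)
    \<le> enn2real (m w) - enn2real (m (w - 1)) - K / ((1 - e) * e)"
proof -
  define r where "r n = enn2real (m n)" for n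
  have m_eq: "m n = ennreal (r n)" if "m n < \<infinity>" for n using that by (simp add: r_def)
  have "r n \<ge> 0" for n by (simp add: r_def)
  then have "(1 - e) * (1 - e) * (K + r w) + (1 - e) * e * (K + r (w - 1))
      + e * (1 - e) * (K + r (w + 1)) + e * e * (K + r w) \<le> r w"
    using ineq e \<open>K \<ge> 0\<close> unfolding m_eq[OF finite(1)] m_eq[OF finite(2)] m_eq[OF finite(3)]
    by (simp add: ennreal_mult[symmetric] ennreal_plus[symmetric] del: ennreal_plus)
  then have "K \<le> (1 - e) * e * ((r w - r (w - 1)) - (r (w + 1) - r w))"
    by (simp add: algebra_simps)
  moreover have "0 < (1 - e) * e" using e by simp
  ultimately have "K / ((1 - e) * e) \<le> (r w - r (w - 1)) - (r (w + 1) - r w)"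
    by (simp add: pos_divide_le_eq mult.commute)
  then show ?thesis by (simp add: r_def)
qed

lemma first_step_solution_infinite:
  fixes V :: "nat \<times> nat \<Rightarrow> ennreal" and e :: real
  assumes e: "0 < e" "e < 1"
    and eq: "\<And>x w. w \<noteq> 0 \<Longrightarrow>
      V (x, w) = ennreal (1 - e) * ennreal (1 - e) * (1 + V (x + 1, w))
      + ennreal (1 - e) * ennreal e * (1 + V (x + 1, w - 1))
      + ennreal e * ennreal (1 - e) * (1 + V (x, w + 1)) + ennreal e * ennreal e * (1 + V (x, w))"
    and "w \<noteq> 0"
  shows "V (x, w) = \<infinity>"
proof -
  define m where "m w = (INF x. V (x, w))" for w
  have ineq: "ennreal (1 - e) * ennreal (1 - e) * (ennreal 1 + m w)
      + ennreal (1 - e) * ennreal e * (ennreal 1 + m (w - 1))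
      + ennreal e * ennreal (1 - e) * (ennreal 1 + m (w + 1))
      + ennreal e * ennreal e * (ennreal 1 + m w) \<le> m w" if "w \<noteq> 0" for w
    unfolding m_def ennreal_1 by (rule INF_first_step_ineq[OF eq[OF that]])
  have finite_Suc: "m (w + 1) < \<infinity>" if "w \<noteq> 0" and "m w < \<infinity>" for w
  proof -
    have "ennreal e * ennreal (1 - e) * (ennreal 1 + m (w + 1)) \<le> m w"
      by (rule order_trans[OF _ ineq[OF that(1)]]) (auto intro!: add_increasing2 add_increasing)
    with that(2) e show ?thesis
      by (auto simp: ennreal_mult_less_top ennreal_mult_eq_top_iff top_unique dest: le_less_trans)
  qed
  txt \<open>Finiteness at one positive gap spreads to all larger gaps, where m is uniformly concave.\<close>
  have "m w = \<infinity>"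
  proof (rule ccontr)
    assume "m w \<noteq> \<infinity>"
    then have finite: "m (w + n) < \<infinity>" for n
      by (induction n) (use \<open>w \<noteq> 0\<close> finite_Suc in \<open>auto simp: top.not_eq_extremum\<close>)
    define r where "r n = enn2real (m (w + n))" for n
    have "r (Suc (Suc j)) - r (Suc j) \<le> r (Suc j) - r j - 1 / ((1 - e) * e)" for j
      using first_step_ineq_real[OF e zero_le_one, of m "w + j + 1"] ineq[of "w + j + 1"]
        finite[of j] finite[of "j + 1"] finite[of "j + 2"]
      by (simp add: r_def)
    then show False
      using no_uniformly_concave_nonneg_seq[of r "1 / ((1 - e) * e)"] e by (simp add: r_def)
  qed
  moreover have "m w \<le> V (x, w)" unfolding m_def by (rule INF_lower) simp
  ultimately show ?thesis by (simp add: top_unique)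
qed

lemma first_step_solution_eq_1:
  fixes V :: "nat \<times> nat \<Rightarrow> ennreal" and e :: real
  assumes e: "0 < e" "e < 1"
    and eq: "\<And>x w. w \<noteq> 0 \<Longrightarrow>
      V (x, w) = ennreal (1 - e) * ennreal (1 - e) * V (x + 1, w)
      + ennreal (1 - e) * ennreal e * V (x + 1, w - 1)
      + ennreal e * ennreal (1 - e) * V (x, w + 1) + ennreal e * ennreal e * V (x, w)"
    and V_0: "\<And>x. V (x, 0) = 1" and V_le_1: "\<And>s. V s \<le> 1"
  shows "V s = 1"
proof -
  define m where "m w = (INF x. V (x, w))" for w
  have m_le: "m w \<le> V (x, w)" for x w unfolding m_def by (rule INF_lower) simp
  have finite: "m n < \<infinity>" for n
    using order_trans[OF m_le[of n 0] V_le_1[of "(0, n)"]]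
    by (metis ennreal_one_less_top infinity_ennreal_def le_less_trans)
  have ineq: "ennreal (1 - e) * ennreal (1 - e) * (ennreal 0 + m w)
      + ennreal (1 - e) * ennreal e * (ennreal 0 + m (w - 1))
      + ennreal e * ennreal (1 - e) * (ennreal 0 + m (w + 1))
      + ennreal e * ennreal e * (ennreal 0 + m w) \<le> m w" if "w \<noteq> 0" for w
    unfolding m_def by (rule INF_first_step_ineq) (simp only: ennreal_0 add_0_left, rule eq[OF that])
  have "enn2real (m (Suc (Suc j))) - enn2real (m (Suc j))
      \<le> enn2real (m (Suc j)) - enn2real (m j)" for j
    using first_step_ineq_real[OF e order_refl, of m "Suc j"] ineq[of "Suc j"] finite by simp
  then have "enn2real (m n) \<le> enn2real (m (Suc n))" for n
    by (rule concave_nonneg_seq_incr[rotated]) simp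
  then have "enn2real (m 0) \<le> enn2real (m n)" for n
    by (induction n) (auto intro: order_trans)
  moreover have "m 0 = 1" by (simp add: m_def V_0)
  ultimately have "1 \<le> enn2real (m (snd s))" by (metis enn2real_1)
  then have "1 \<le> m (snd s)"
    using finite[of "snd s"]
    by (cases "m (snd s)" rule: ennreal_cases) (auto simp: ennreal_1[symmetric] simp del: ennreal_1)
  then have "1 \<le> V s" using m_le[of "snd s" "fst s"] by simp
  with V_le_1 show ?thesis by (intro antisym)
qed

section \<open>Hitting and return times\<close>

lemma hit_probability_eq_1: "0 < e \<Longrightarrow> e < 1 \<Longrightarrow> hit_probability e s = 1"
  using first_step_solution_eq_1[of e "hit_probability e" s]
    hit_probability_eq hit_probability_0 hit_probability_le_1 by simp

lemma expected_hit_time_infinite: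
  "0 < e \<Longrightarrow> e < 1 \<Longrightarrow> snd s \<noteq> 0 \<Longrightarrow> expected_hit_time e s = \<infinity>"
  using first_step_solution_infinite[of e "expected_hit_time e" "snd s" "fst s"] expected_hit_time_eq
  by simp

lemma return_time_finite_AE:
  assumes "0 < e" and "e < 1"
  shows "emeasure (coin_space e) {\<omega> \<in> space (coin_space e). return_time s \<omega> < \<infinity>} = 1"
proof -
  have [measurable]: "return_time s \<in> measurable (coin_space e) (count_space UNIV)"
    unfolding coin_space_def by (rule measurable_return_time)
  have "{\<omega> \<in> space (coin_space e). return_time s \<omega> < \<infinity>} \<in> sets (coin_space e)"
    by measurable
  then have "emeasure (coin_space e) {\<omega> \<in> space (coin_space e). return_time s \<omega> < \<infinity>}
      = (\<integral>\<^sup>+\<omega>. indicator {\<omega> \<in> space (coin_space e). return_time s \<omega> < \<infinity>} \<omega> \<partial>coin_space e)"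
    by (rule nn_integral_indicator[symmetric])
  also have "\<dots> = (\<integral>\<^sup>+\<omega>. of_bool (return_time s \<omega> < \<infinity>) \<partial>coin_space e)"
    by (rule nn_integral_cong) (simp add: indicator_def)
  also have "\<dots> = 1"
    unfolding return_probability hit_probability_eq_1[OF assms] using assms
    by (simp add: UNIV_bool ennreal_mult[symmetric] ennreal_plus[symmetric] algebra_simps
        del: ennreal_plus)
  finally show ?thesis .
qed

lemma expected_return_time_infinite:
  assumes "0 < e" and "e < 1"
  shows "(\<integral>\<^sup>+\<omega>. ennreal_of_enat (return_time s \<omega>) \<partial>coin_space e) = \<infinity>"
proof -
  have "expected_hit_time e (two_ball_step s False True) = \<infinity>"
    using assms by (intro expected_hit_time_infinite) (simp_all add: two_ball_step_def)
  with assms show ?thesis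
    by (simp add: expected_return_time UNIV_bool ennreal_mult_eq_top_iff)
qed

theorem mainTheorem9:
  fixes \<epsilon> :: real and c :: enat and \<zeta>0 :: "nat \<Rightarrow> bool"
  assumes "0 < \<epsilon>" and "\<epsilon> < 1" and "c \<ge> 2"
    and "card {k. \<zeta>0 k} = 2" and "\<not> \<zeta>0 0"
  shows "emeasure (coin_space \<epsilon>) {\<omega> \<in> space (coin_space \<epsilon>). hit_time c \<zeta>0 \<omega> < \<infinity>} = 1
       \<and> (\<integral>\<^sup>+ \<omega>. ennreal_of_enat (hit_time c \<zeta>0 \<omega>) \<partial>coin_space \<epsilon>) = \<infinity>"
proof -
  obtain x w where "x \<ge> 1" and "\<zeta>0 = two_balls (x, w)"
    using two_balls_if_card_2[OF assms(4,5)] .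
  then have "hit_time c \<zeta>0 \<omega> = return_time (x, w) \<omega>" for \<omega>
    using hit_time_two_balls[of "(x, w)" c] assms(3) by simp
  then show ?thesis
    using return_time_finite_AE expected_return_time_infinite assms(1,2) by simp
qed

end
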